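(* In the setting below, let $A\in\Lambda^1(M,\mathfrak g)$, $B\in\Lambda^2(M,\mathfrak h)$, $C\in\Lambda^3(M,\mathfrak l)$, with curvatures $\Omega_1=dA+\tfrac12[A,A]-\alpha(B)$, $\Omega_2=dB+A\triangleright B-\beta(C)$, $\Omega_3=dC+A\triangleright C+\{B,B\}$, and let $\mathrm{CS}_5(A,B,C)=\langle 2F-\alpha(B),C\rangle_{\mathfrak g,\mathfrak l}+\langle B,\Omega_2\rangle_{\mathfrak h}-d\langle A,C\rangle_{\mathfrak g,\mathfrak l}$ with $F=dA+\tfrac12[A,A]$. Then $$d\,\mathrm{CS}_5(A,B,C)=2\langle\Omega_1,\Omega_3\rangle_{\mathfrak g,\mathfrak l}+\langle\Omega_2,\Omega_2\rangle_{\mathfrak h}.$$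
   Context: A differential 2-crossed module $(\mathfrak l,\mathfrak h,\mathfrak g;\beta,\alpha,\triangleright,\{\cdot,\cdot\})$: Lie homomorphisms $\mathfrak l\xrightarrow{\beta}\mathfrak h\xrightarrow{\alpha}\mathfrak g$ with $\alpha\circ\beta=0$, a $\mathfrak g$-action $\triangleright$ by derivations on $\mathfrak l,\mathfrak h$ and adjointly on $\mathfrak g$, with $\alpha,\beta$ equivariant, and a $\mathfrak g$-equivariant bilinear Peiffer lifting $\{\cdot,\cdot\}:\mathfrak h\times\mathfrak h\to\mathfrak l$ satisfying $\beta\{Y_1,Y_2\}=[Y_1,Y_2]-\alpha(Y_1)\triangleright Y_2$, $[Z_1,Z_2]=\{\beta Z_1,\beta Z_2\}$, $\{\beta(Z),Y\}+\{Y,\beta(Z)\}=-\alpha(Y)\triangleright Z$, and the remaining standard 2-crossed module axioms; it is the differential of a Lie 2-crossed module $L\to H\to G$. $G$-invariant pairings: an antisymmetric non-degenerate bilinear form $\langle-,-\rangle_{\mathfrak h}$ with $\langle[Y,Y_1],Y_2\rangle_{\mathfrak h}=-\langle Y_1,[Y,Y_2]\rangle_{\mathfrak h}$, $\langle Y,X\triangleright Y_1\rangle_{\mathfrak h}=\langle Y_1,X\triangleright Y\rangle_{\mathfrak h}$, $G$-invariant; and a non-singular bilinear form $\langle-,-\rangle_{\mathfrak g,\mathfrak l}:\mathfrak g\times\mathfrak l\to\mathbb R$ with $\langle[X_1,X_2],Z\rangle_{\mathfrak g,\mathfrak l}=-\langle X_2,X_1\triangleright Z\rangle_{\mathfrak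 g,\mathfrak l}$, $\langle\alpha(Y),Z\rangle_{\mathfrak g,\mathfrak l}=-\langle\beta(Z),Y\rangle_{\mathfrak h}$, $\langle X,\{Y_1,Y_2\}\rangle_{\mathfrak g,\mathfrak l}=\tfrac12\langle Y_2,X\triangleright Y_1\rangle_{\mathfrak h}$, $G$-invariant. On a smooth manifold $M$, all operations and pairings extend componentwise to Lie-algebra-valued forms (e.g. $\langle A,C\rangle_{\mathfrak g,\mathfrak l}=A^a\wedge C^b\langle X_a,Z_b\rangle$, $\langle B_1,B_2\rangle_{\mathfrak h}=B_1^a\wedge B_2^b\langle Y_a,Y_b\rangle$, $\{B_1,B_2\}=B_1^a\wedge B_2^b\otimes\{Y_a,Y_b\}$, $A\triangleright C=A^a\wedge C^b\otimes X_a\triangleright Z_b$). *)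

theory Defs
  imports "HOL-Analysis.Analysis"
begin

text \<open>The real forms Lambda(M) on a smooth manifold M, with exterior product wedge,
  exterior derivative d and homogeneous components hom k = Lambda^k(M).
  Only the structural properties of Lambda(M) are recorded.\<close>

definition forms_algebra ::
  "('w::real_vector \<Rightarrow> 'w \<Rightarrow> 'w) \<Rightarrow> ('w \<Rightarrow> 'w) \<Rightarrow> (nat \<Rightarrow> 'w set) \<Rightarrow> bool" where
  "forms_algebra wedge d hom \<longleftrightarrow>
     (\<forall>k. subspace (hom k)) \<and>
     bilinear wedge \<and> linear d \<and>
     (\<forall>a b c. wedge (wedge a b) c = wedge a (wedge b c)) \<and>
     (\<forall>p q a b. a \<in> hom p \<longrightarrow> b \<in> hom q \<longrightarrow> wedge a b \<in> hom (p + q)) \<and>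
     (\<forall>p q a b. a \<in> hom p \<longrightarrow> b \<in> hom q \<longrightarrow> wedge a b = (-1) ^ (p * q) *\<^sub>R wedge b a) \<and>
     (\<forall>p a. a \<in> hom p \<longrightarrow> d a \<in> hom (Suc p)) \<and>
     (\<forall>a. d (d a) = 0) \<and>
     (\<forall>p a b. a \<in> hom p \<longrightarrow> d (wedge a b) = wedge (d a) b + (-1) ^ p *\<^sub>R wedge a (d b))"

text \<open>Finite-dimensional real Lie algebras are represented on coordinate space real^'n
  (via a chosen basis axis i 1).\<close>

definition lie_algebra :: "('v::real_vector \<Rightarrow> 'v \<Rightarrow> 'v) \<Rightarrow> bool" where
  "lie_algebra br \<longleftrightarrow> bilinear br \<and> (\<forall>x. br x x = 0) \<and>
     (\<forall>x y z. br x (br y z) + br y (br z x) + br z (br x y) = 0)"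

definition lie_hom :: "('v::real_vector \<Rightarrow> 'v \<Rightarrow> 'v) \<Rightarrow> ('u::real_vector \<Rightarrow> 'u \<Rightarrow> 'u)
    \<Rightarrow> ('v \<Rightarrow> 'u) \<Rightarrow> bool" where
  "lie_hom brv bru f \<longleftrightarrow> linear f \<and> (\<forall>x y. f (brv x y) = bru (f x) (f y))"

definition lie_action_deriv :: "('g::real_vector \<Rightarrow> 'g \<Rightarrow> 'g) \<Rightarrow> ('v::real_vector \<Rightarrow> 'v \<Rightarrow> 'v)
    \<Rightarrow> ('g \<Rightarrow> 'v \<Rightarrow> 'v) \<Rightarrow> bool" where
  "lie_action_deriv brg brv act \<longleftrightarrow> bilinear act \<and>
     (\<forall>X1 X2 v. act (brg X1 X2) v = act X1 (act X2 v) - act X2 (act X1 v)) \<and>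
     (\<forall>X v w. act X (brv v w) = brv (act X v) w + brv v (act X w))"

definition diff_2crossed_module ::
  "('l::real_vector \<Rightarrow> 'l \<Rightarrow> 'l) \<Rightarrow> ('h::real_vector \<Rightarrow> 'h \<Rightarrow> 'h) \<Rightarrow> ('g::real_vector \<Rightarrow> 'g \<Rightarrow> 'g)
   \<Rightarrow> ('l \<Rightarrow> 'h) \<Rightarrow> ('h \<Rightarrow> 'g) \<Rightarrow> ('g \<Rightarrow> 'l \<Rightarrow> 'l) \<Rightarrow> ('g \<Rightarrow> 'h \<Rightarrow> 'h)
   \<Rightarrow> ('h \<Rightarrow> 'h \<Rightarrow> 'l) \<Rightarrow> bool" where
  "diff_2crossed_module brl brh brg \<beta> \<alpha> actl acth pf \<longleftrightarrow>
     lie_algebra brl \<and> lie_algebra brh \<and> lie_algebra brg \<and>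
     lie_hom brl brh \<beta> \<and> lie_hom brh brg \<alpha> \<and> (\<forall>Z. \<alpha> (\<beta> Z) = 0) \<and>
     lie_action_deriv brg brl actl \<and> lie_action_deriv brg brh acth \<and>
     (\<forall>X Y. \<alpha> (acth X Y) = brg X (\<alpha> Y)) \<and>
     (\<forall>X Z. \<beta> (actl X Z) = acth X (\<beta> Z)) \<and>
     bilinear pf \<and>
     (\<forall>X Y1 Y2. actl X (pf Y1 Y2) = pf (acth X Y1) Y2 + pf Y1 (acth X Y2)) \<and>
     (\<forall>Y1 Y2. \<beta> (pf Y1 Y2) = brh Y1 Y2 - acth (\<alpha> Y1) Y2) \<and>
     (\<forall>Z1 Z2. brl Z1 Z2 = pf (\<beta> Z1) (\<beta> Z2)) \<and>
     (\<forall>Y1 Y2 Y3. pf (brh Y1 Y2) Y3 =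
        actl (\<alpha> Y1) (pf Y2 Y3) + pf Y1 (brh Y2 Y3) - actl (\<alpha> Y2) (pf Y1 Y3) - pf Y2 (brh Y1 Y3)) \<and>
     (\<forall>Y1 Y2 Y3. pf Y1 (brh Y2 Y3) = pf (\<beta> (pf Y1 Y2)) Y3 - pf (\<beta> (pf Y1 Y3)) Y2) \<and>
     (\<forall>Z Y. pf (\<beta> Z) Y + pf Y (\<beta> Z) = - actl (\<alpha> Y) Z)"

definition invariant_pairings ::
  "('l::real_vector \<Rightarrow> 'l \<Rightarrow> 'l) \<Rightarrow> ('h::real_vector \<Rightarrow> 'h \<Rightarrow> 'h) \<Rightarrow> ('g::real_vector \<Rightarrow> 'g \<Rightarrow> 'g)
   \<Rightarrow> ('l \<Rightarrow> 'h) \<Rightarrow> ('h \<Rightarrow> 'g) \<Rightarrow> ('g \<Rightarrow> 'l \<Rightarrow> 'l) \<Rightarrow> ('g \<Rightarrow> 'h \<Rightarrow> 'h)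
   \<Rightarrow> ('h \<Rightarrow> 'h \<Rightarrow> 'l) \<Rightarrow> ('h \<Rightarrow> 'h \<Rightarrow> real) \<Rightarrow> ('g \<Rightarrow> 'l \<Rightarrow> real) \<Rightarrow> bool" where
  "invariant_pairings brl brh brg \<beta> \<alpha> actl acth pf ph pgl \<longleftrightarrow>
     bilinear ph \<and>
     (\<forall>Y1 Y2. ph Y1 Y2 = - ph Y2 Y1) \<and>
     (\<forall>Y1. (\<forall>Y2. ph Y1 Y2 = 0) \<longrightarrow> Y1 = 0) \<and>
     (\<forall>Y Y1 Y2. ph (brh Y Y1) Y2 = - ph Y1 (brh Y Y2)) \<and>
     (\<forall>X Y Y1. ph Y (acth X Y1) = ph Y1 (acth X Y)) \<and>
     (\<forall>X Y1 Y2. ph (acth X Y1) Y2 + ph Y1 (acth X Y2) = 0) \<and>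
     bilinear pgl \<and>
     (\<forall>X. (\<forall>Z. pgl X Z = 0) \<longrightarrow> X = 0) \<and>
     (\<forall>Z. (\<forall>X. pgl X Z = 0) \<longrightarrow> Z = 0) \<and>
     (\<forall>X1 X2 Z. pgl (brg X1 X2) Z = - pgl X2 (actl X1 Z)) \<and>
     (\<forall>Y Z. pgl (\<alpha> Y) Z = - ph (\<beta> Z) Y) \<and>
     (\<forall>X Y1 Y2. pgl X (pf Y1 Y2) = (1/2) * ph Y2 (acth X Y1))"

section \<open>Lie-algebra-valued forms (components w.r.t. the basis axis i 1)\<close>

definition vform :: "(nat \<Rightarrow> 'w set) \<Rightarrow> nat \<Rightarrow> ('a \<Rightarrow> 'w) \<Rightarrow> bool" where
  "vform hom k A \<longleftrightarrow> (\<forall>i. A i \<in> hom k)"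

definition dV :: "('w \<Rightarrow> 'w) \<Rightarrow> ('a \<Rightarrow> 'w) \<Rightarrow> ('a \<Rightarrow> 'w)" where
  "dV d A = (\<lambda>i. d (A i))"

definition ext1 :: "(real^'a \<Rightarrow> real^'b) \<Rightarrow> ('a::finite \<Rightarrow> 'w::real_vector) \<Rightarrow> ('b \<Rightarrow> 'w)" where
  "ext1 f A = (\<lambda>c. \<Sum>a\<in>UNIV. (f (axis a 1) $ c) *\<^sub>R A a)"

definition ext2 :: "('w::real_vector \<Rightarrow> 'w \<Rightarrow> 'w) \<Rightarrow> (real^'a \<Rightarrow> real^'b \<Rightarrow> real^'c)
    \<Rightarrow> ('a::finite \<Rightarrow> 'w) \<Rightarrow> ('b::finite \<Rightarrow> 'w) \<Rightarrow> ('c \<Rightarrow> 'w)" where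
  "ext2 wedge f A B = (\<lambda>c. \<Sum>a\<in>UNIV. \<Sum>b\<in>UNIV. (f (axis a 1) (axis b 1) $ c) *\<^sub>R wedge (A a) (B b))"

definition pair2 :: "('w::real_vector \<Rightarrow> 'w \<Rightarrow> 'w) \<Rightarrow> (real^'a \<Rightarrow> real^'b \<Rightarrow> real)
    \<Rightarrow> ('a::finite \<Rightarrow> 'w) \<Rightarrow> ('b::finite \<Rightarrow> 'w) \<Rightarrow> 'w" where
  "pair2 wedge p A B = (\<Sum>a\<in>UNIV. \<Sum>b\<in>UNIV. p (axis a 1) (axis b 1) *\<^sub>R wedge (A a) (B b))"

definition fake_curv :: "('w::real_vector \<Rightarrow> 'w \<Rightarrow> 'w) \<Rightarrow> ('w \<Rightarrow> 'w)
    \<Rightarrow> (real^'g \<Rightarrow> real^'g \<Rightarrow> real^'g) \<Rightarrow> ('g::finite \<Rightarrow> 'w) \<Rightarrow> ('g \<Rightarrow> 'w)" where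
  "fake_curv wedge d brg A = (\<lambda>i. d (A i) + (1/2) *\<^sub>R ext2 wedge brg A A i)"

definition curv1 :: "('w::real_vector \<Rightarrow> 'w \<Rightarrow> 'w) \<Rightarrow> ('w \<Rightarrow> 'w)
    \<Rightarrow> (real^'g \<Rightarrow> real^'g \<Rightarrow> real^'g) \<Rightarrow> (real^'h \<Rightarrow> real^'g)
    \<Rightarrow> ('g::finite \<Rightarrow> 'w) \<Rightarrow> ('h::finite \<Rightarrow> 'w) \<Rightarrow> ('g \<Rightarrow> 'w)" where
  "curv1 wedge d brg \<alpha> A B = (\<lambda>i. d (A i) + (1/2) *\<^sub>R ext2 wedge brg A A i - ext1 \<alpha> B i)"

definition curv2 :: "('w::real_vector \<Rightarrow> 'w \<Rightarrow> 'w) \<Rightarrow> ('w \<Rightarrow> 'w)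
    \<Rightarrow> (real^'g \<Rightarrow> real^'h \<Rightarrow> real^'h) \<Rightarrow> (real^'l \<Rightarrow> real^'h)
    \<Rightarrow> ('g::finite \<Rightarrow> 'w) \<Rightarrow> ('h::finite \<Rightarrow> 'w) \<Rightarrow> ('l::finite \<Rightarrow> 'w) \<Rightarrow> ('h \<Rightarrow> 'w)" where
  "curv2 wedge d acth \<beta> A B C = (\<lambda>i. d (B i) + ext2 wedge acth A B i - ext1 \<beta> C i)"

definition curv3 :: "('w::real_vector \<Rightarrow> 'w \<Rightarrow> 'w) \<Rightarrow> ('w \<Rightarrow> 'w)
    \<Rightarrow> (real^'g \<Rightarrow> real^'l \<Rightarrow> real^'l) \<Rightarrow> (real^'h \<Rightarrow> real^'h \<Rightarrow> real^'l)
    \<Rightarrow> ('g::finite \<Rightarrow> 'w) \<Rightarrow> ('h::finite \<Rightarrow> 'w) \<Rightarrow> ('l::finite \<Rightarrow> 'w) \<Rightarrow> ('l \<Rightarrow> 'w)" where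
  "curv3 wedge d actl pf A B C = (\<lambda>i. d (C i) + ext2 wedge actl A C i + ext2 wedge pf B B i)"

definition CS5 :: "('w::real_vector \<Rightarrow> 'w \<Rightarrow> 'w) \<Rightarrow> ('w \<Rightarrow> 'w)
    \<Rightarrow> (real^'g \<Rightarrow> real^'g \<Rightarrow> real^'g) \<Rightarrow> (real^'h \<Rightarrow> real^'g) \<Rightarrow> (real^'l \<Rightarrow> real^'h)
    \<Rightarrow> (real^'g \<Rightarrow> real^'h \<Rightarrow> real^'h) \<Rightarrow> (real^'h \<Rightarrow> real^'h \<Rightarrow> real) \<Rightarrow> (real^'g \<Rightarrow> real^'l \<Rightarrow> real)
    \<Rightarrow> ('g::finite \<Rightarrow> 'w) \<Rightarrow> ('h::finite \<Rightarrow> 'w) \<Rightarrow> ('l::finite \<Rightarrow> 'w) \<Rightarrow> 'w" where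
  "CS5 wedge d brg \<alpha> \<beta> acth ph pgl A B C =
     pair2 wedge pgl (\<lambda>i. 2 *\<^sub>R fake_curv wedge d brg A i - ext1 \<alpha> B i) C
     + pair2 wedge ph B (curv2 wedge d acth \<beta> A B C)
     - d (pair2 wedge pgl A C)"

end

theory Submission
  imports Defs
begin

(* Expanding A, B, C in the chosen bases turns both sides into sums of wedge products of two to four
   component forms, each weighted by a multilinear coefficient built from the structure maps and the
   pairings; for the left side only the Leibniz rule and d d = 0 are needed. The expansions are then
   matched term by term: graded commutativity reorders the wedge factors, after which the
   coefficients agree by the invariance of the pairings and the 2-crossed module axioms. The
   remaining terms of the right side vanish: <[A,A], A \<triangleright> C> by the Jacobi identity,
   (\<beta>(C), \<beta>(C)) since \<alpha> \<beta> = 0, and <\<alpha>(B), {B,B}> because, after a cyclic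
   permutation of the B's, the axioms for <X, {Y1,Y2}> and <\<alpha>(Y), Z> express its coefficient
   as -1/2 times and as 1 times the same pairing. *)

lemma linear_basis_expansion:
  fixes g :: "real^'n \<Rightarrow> 'b::real_vector"
  assumes "linear g"
  shows "g v = (\<Sum>c\<in>UNIV. (v $ c) *\<^sub>R g (axis c 1))"
proof -
  have "v = (\<Sum>c\<in>UNIV. (v $ c) *\<^sub>R axis c 1)"
    using basis_expansion[of v] by (simp add: scalar_mult_eq_scaleR)
  then have "g v = g (\<Sum>c\<in>UNIV. (v $ c) *\<^sub>R axis c 1)" by simp
  also have "\<dots> = (\<Sum>c\<in>UNIV. (v $ c) *\<^sub>R g (axis c 1))"
    using assms by (simp add: linear_sum linear_scale)
  finally show ?thesis .
qed

lemma eq_scaleR_self_imp_zero: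
  fixes x :: "'a::real_vector"
  assumes "x = a *\<^sub>R x" "a \<noteq> 1"
  shows "x = 0"
proof -
  have "(1 - a) *\<^sub>R x = x - a *\<^sub>R x"
    by (simp only: scaleR_left_diff_distrib scaleR_one)
  also have "\<dots> = 0"
    by (metis assms(1) diff_self)
  finally show ?thesis
    using assms(2) by simp
qed

lemma sum_rotate3:
  "(\<Sum>a\<in>A. \<Sum>b\<in>B. \<Sum>c\<in>C. f a b c) = (\<Sum>b\<in>B. \<Sum>c\<in>C. \<Sum>a\<in>A. f a b c)"
proof -
  have "(\<Sum>a\<in>A. \<Sum>b\<in>B. \<Sum>c\<in>C. f a b c) = (\<Sum>b\<in>B. \<Sum>a\<in>A. \<Sum>c\<in>C. f a b c)"
    by (rule sum.swap)
  also have "\<dots> = (\<Sum>b\<in>B. \<Sum>c\<in>C. \<Sum>a\<in>A. f a b c)"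
    by (rule sum.cong[OF refl], rule sum.swap)
  finally show ?thesis .
qed

lemma sum_swap23:
  "(\<Sum>a\<in>A. \<Sum>b\<in>B. \<Sum>c\<in>C. f a b c) = (\<Sum>a\<in>A. \<Sum>c\<in>C. \<Sum>b\<in>B. f a b c)"
  by (rule sum.cong[OF refl], rule sum.swap)

definition pair3 :: "('w::real_vector \<Rightarrow> 'w \<Rightarrow> 'w) \<Rightarrow> (real^'a \<Rightarrow> real^'b \<Rightarrow> real^'c \<Rightarrow> real)
    \<Rightarrow> ('a::finite \<Rightarrow> 'w) \<Rightarrow> ('b::finite \<Rightarrow> 'w) \<Rightarrow> ('c::finite \<Rightarrow> 'w) \<Rightarrow> 'w" where
  "pair3 W q X Y Z = (\<Sum>a\<in>UNIV. \<Sum>b\<in>UNIV. \<Sum>c\<in>UNIV.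
     q (axis a 1) (axis b 1) (axis c 1) *\<^sub>R W (W (X a) (Y b)) (Z c))"

definition pair4 :: "('w::real_vector \<Rightarrow> 'w \<Rightarrow> 'w) \<Rightarrow> (real^'a \<Rightarrow> real^'b \<Rightarrow> real^'c \<Rightarrow> real^'e \<Rightarrow> real)
    \<Rightarrow> ('a::finite \<Rightarrow> 'w) \<Rightarrow> ('b::finite \<Rightarrow> 'w) \<Rightarrow> ('c::finite \<Rightarrow> 'w) \<Rightarrow> ('e::finite \<Rightarrow> 'w) \<Rightarrow> 'w" where
  "pair4 W q X Y Z U = (\<Sum>a\<in>UNIV. \<Sum>b\<in>UNIV. \<Sum>c\<in>UNIV. \<Sum>e\<in>UNIV.
     q (axis a 1) (axis b 1) (axis c 1) (axis e 1) *\<^sub>R W (W (W (X a) (Y b)) (Z c)) (U e))"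

lemma pair2_coeff_minus:
  "pair2 W (\<lambda>x y. - p x y) X Y = - pair2 W p X Y"
  unfolding pair2_def by (simp add: sum_negf)

lemma pair3_coeff_minus:
  "pair3 W (\<lambda>x y z. - q x y z) X Y Z = - pair3 W q X Y Z"
  unfolding pair3_def by (simp add: sum_negf)

lemma pair3_coeff_add:
  "pair3 W (\<lambda>x y z. q x y z + r x y z) X Y Z = pair3 W q X Y Z + pair3 W r X Y Z"
  unfolding pair3_def by (simp add: scaleR_add_left sum.distrib)

lemma pair3_coeff_diff:
  "pair3 W (\<lambda>x y z. q x y z - r x y z) X Y Z = pair3 W q X Y Z - pair3 W r X Y Z"
  unfolding pair3_def by (simp add: scaleR_diff_left sum_subtractf)

lemma pair3_coeff_scale:
  "pair3 W (\<lambda>x y z. c * q x y z) X Y Z = c *\<^sub>R pair3 W q X Y Z"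
  unfolding pair3_def by (simp add: scaleR_sum_right)

lemma pair4_coeff_add:
  "pair4 W (\<lambda>x y z u. q x y z u + r x y z u) X Y Z U = pair4 W q X Y Z U + pair4 W r X Y Z U"
  unfolding pair4_def by (simp add: scaleR_add_left sum.distrib)

lemma pair4_coeff_scale:
  "pair4 W (\<lambda>x y z u. c * q x y z u) X Y Z U = c *\<^sub>R pair4 W q X Y Z U"
  unfolding pair4_def by (simp add: scaleR_sum_right)

locale graded_forms =
  fixes W :: "'w::real_vector \<Rightarrow> 'w \<Rightarrow> 'w" and d :: "'w \<Rightarrow> 'w" and hom :: "nat \<Rightarrow> 'w set"
  assumes forms_algebra: "forms_algebra W d hom"
begin

lemma wedge_bilinear: "bilinear W"
  and d_linear: "linear d"
  and wedge_assoc: "W (W a b) c = W a (W b c)"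
  and wedge_hom: "a \<in> hom p \<Longrightarrow> b \<in> hom q \<Longrightarrow> W a b \<in> hom (p + q)"
  and wedge_commute: "a \<in> hom p \<Longrightarrow> b \<in> hom q \<Longrightarrow> W a b = (-1) ^ (p * q) *\<^sub>R W b a"
  and d_hom: "a \<in> hom p \<Longrightarrow> d a \<in> hom (Suc p)"
  and d_d: "d (d a) = 0"
  and d_wedge: "a \<in> hom p \<Longrightarrow> d (W a b) = W (d a) b + (-1) ^ p *\<^sub>R W a (d b)"
  using forms_algebra unfolding forms_algebra_def by blast+

lemma wedge_sum_left: "W (\<Sum>i\<in>S. f i) y = (\<Sum>i\<in>S. W (f i) y)"
  using linear_sum[of "\<lambda>x. W x y"] wedge_bilinear by (simp add: bilinear_def)

lemma wedge_sum_right: "W y (\<Sum>i\<in>S. f i) = (\<Sum>i\<in>S. W y (f i))"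
  using linear_sum[of "\<lambda>x. W y x"] wedge_bilinear by (simp add: bilinear_def)

lemmas wedge_linear_simps =
  wedge_sum_left wedge_sum_right
  bilinear_lmul[OF wedge_bilinear] bilinear_rmul[OF wedge_bilinear]
  bilinear_ladd[OF wedge_bilinear] bilinear_radd[OF wedge_bilinear]
  bilinear_lsub[OF wedge_bilinear] bilinear_rsub[OF wedge_bilinear]
  bilinear_lzero[OF wedge_bilinear] bilinear_rzero[OF wedge_bilinear]

lemmas d_linear_simps =
  linear_sum[OF d_linear] linear_scale[OF d_linear] linear_add[OF d_linear]
  linear_diff[OF d_linear] linear_0[OF d_linear]

lemma vform_d: "vform hom k X \<Longrightarrow> vform hom (Suc k) (\<lambda>i. d (X i))"
  by (simp add: vform_def d_hom)

lemma d_pair2: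
  assumes "vform hom k X"
  shows "d (pair2 W p X Y) = pair2 W p (\<lambda>i. d (X i)) Y + (-1) ^ k *\<^sub>R pair2 W p X (\<lambda>i. d (Y i))"
proof -
  have "d (W (X a) (Y b)) = W (d (X a)) (Y b) + (-1) ^ k *\<^sub>R W (X a) (d (Y b))" for a b
    using assms d_wedge by (simp add: vform_def)
  then show ?thesis
    unfolding pair2_def
    by (simp add: d_linear_simps scaleR_add_right sum.distrib scaleR_sum_right mult.commute)
qed

lemma d_pair3:
  assumes X: "vform hom k X" and Y: "vform hom l Y"
  shows "d (pair3 W q X Y Z) = pair3 W q (\<lambda>i. d (X i)) Y Z
     + (-1) ^ k *\<^sub>R pair3 W q X (\<lambda>i. d (Y i)) Z
     + (-1) ^ (k + l) *\<^sub>R pair3 W q X Y (\<lambda>i. d (Z i))"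
proof -
  have "d (W (W (X a) (Y b)) (Z c)) = W (W (d (X a)) (Y b)) (Z c)
     + (-1) ^ k *\<^sub>R W (W (X a) (d (Y b))) (Z c) + (-1) ^ (k + l) *\<^sub>R W (W (X a) (Y b)) (d (Z c))"
    for a b c
  proof -
    have "X a \<in> hom k" "Y b \<in> hom l" using X Y by (auto simp: vform_def)
    then show ?thesis
      using d_wedge[OF wedge_hom] d_wedge[of "X a" k] by (simp add: wedge_linear_simps)
  qed
  then show ?thesis
    unfolding pair3_def
    by (simp add: d_linear_simps scaleR_add_right sum.distrib scaleR_sum_right mult.commute)
qed

lemma pair2_swap:
  assumes "vform hom k X" "vform hom l Y"
  shows "pair2 W p X Y = (-1) ^ (k * l) *\<^sub>R pair2 W (\<lambda>y x. p x y) Y X"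
proof -
  have "W (X a) (Y b) = (-1) ^ (k * l) *\<^sub>R W (Y b) (X a)" for a b
    using assms wedge_commute by (simp add: vform_def)
  then show ?thesis
    unfolding pair2_def by (subst sum.swap) (simp add: scaleR_sum_right mult.commute)
qed

lemma pair3_swap12:
  assumes "vform hom k X" "vform hom l Y"
  shows "pair3 W q X Y Z = (-1) ^ (k * l) *\<^sub>R pair3 W (\<lambda>y x z. q x y z) Y X Z"
proof -
  have "W (X a) (Y b) = (-1) ^ (k * l) *\<^sub>R W (Y b) (X a)" for a b
    using assms wedge_commute by (simp add: vform_def)
  then show ?thesis
    unfolding pair3_def
    by (subst sum.swap) (simp add: wedge_linear_simps scaleR_sum_right mult.commute)
qed

lemma pair3_rotate:
  assumes "vform hom k X" "vform hom l Y" "vform hom m Z"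
  shows "pair3 W q X Y Z = (-1) ^ (k * (l + m)) *\<^sub>R pair3 W (\<lambda>y z x. q x y z) Y Z X"
proof -
  have "W (W (X a) (Y b)) (Z c) = (-1) ^ (k * (l + m)) *\<^sub>R W (W (Y b) (Z c)) (X a)" for a b c
    using assms wedge_commute[of "X a" k "W (Y b) (Z c)" "l + m"] wedge_hom wedge_assoc
    by (simp add: vform_def)
  then show ?thesis
    unfolding pair3_def by (subst sum_rotate3) (simp add: scaleR_sum_right mult.commute)
qed

lemma pair4_swap12:
  assumes "vform hom k X" "vform hom l Y"
  shows "pair4 W q X Y Z U = (-1) ^ (k * l) *\<^sub>R pair4 W (\<lambda>y x z u. q x y z u) Y X Z U"
proof -
  have "W (X a) (Y b) = (-1) ^ (k * l) *\<^sub>R W (Y b) (X a)" for a b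
    using assms wedge_commute by (simp add: vform_def)
  then show ?thesis
    unfolding pair4_def
    by (subst sum.swap) (simp add: wedge_linear_simps scaleR_sum_right mult.commute)
qed

lemma pair4_swap23:
  assumes "vform hom l Y" "vform hom m Z"
  shows "pair4 W q X Y Z U = (-1) ^ (l * m) *\<^sub>R pair4 W (\<lambda>x z y u. q x y z u) X Z Y U"
proof -
  have "W (W (X a) (Y b)) (Z c) = (-1) ^ (l * m) *\<^sub>R W (W (X a) (Z c)) (Y b)" for a b c
    using assms wedge_commute[of "Y b" l "Z c" m] wedge_assoc
    by (simp add: vform_def wedge_linear_simps)
  then show ?thesis
    unfolding pair4_def
    by (simp add: wedge_linear_simps scaleR_sum_right mult.commute) (rule sum_swap23)
qed

lemma pair4_rotate:
  assumes "vform hom k X" "vform hom l Y" "vform hom m Z"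
  shows "pair4 W q X Y Z U = (-1) ^ (k * (l + m)) *\<^sub>R pair4 W (\<lambda>y z x u. q x y z u) Y Z X U"
proof -
  have "W (W (X a) (Y b)) (Z c) = (-1) ^ (k * (l + m)) *\<^sub>R W (W (Y b) (Z c)) (X a)" for a b c
    using assms wedge_commute[of "X a" k "W (Y b) (Z c)" "l + m"] wedge_hom wedge_assoc
    by (simp add: vform_def)
  then show ?thesis
    unfolding pair4_def
    by (subst sum_rotate3) (simp add: wedge_linear_simps scaleR_sum_right mult.commute)
qed

lemma pair2_add_left: "pair2 W p (\<lambda>i. X i + Y i) Z = pair2 W p X Z + pair2 W p Y Z"
  unfolding pair2_def by (simp add: wedge_linear_simps scaleR_add_right sum.distrib)

lemma pair2_diff_left: "pair2 W p (\<lambda>i. X i - Y i) Z = pair2 W p X Z - pair2 W p Y Z"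
  unfolding pair2_def by (simp add: wedge_linear_simps scaleR_diff_right sum_subtractf)

lemma pair2_scale_left: "pair2 W p (\<lambda>i. c *\<^sub>R X i) Z = c *\<^sub>R pair2 W p X Z"
  unfolding pair2_def by (simp add: wedge_linear_simps scaleR_sum_right mult.commute)

lemma pair2_add_right: "pair2 W p Z (\<lambda>i. X i + Y i) = pair2 W p Z X + pair2 W p Z Y"
  unfolding pair2_def by (simp add: wedge_linear_simps scaleR_add_right sum.distrib)

lemma pair2_diff_right: "pair2 W p Z (\<lambda>i. X i - Y i) = pair2 W p Z X - pair2 W p Z Y"
  unfolding pair2_def by (simp add: wedge_linear_simps scaleR_diff_right sum_subtractf)

lemma pair2_scale_right: "pair2 W p Z (\<lambda>i. c *\<^sub>R X i) = c *\<^sub>R pair2 W p Z X"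
  unfolding pair2_def by (simp add: wedge_linear_simps scaleR_sum_right mult.commute)

lemma pair2_zero_left: "pair2 W p (\<lambda>i. 0) Y = 0"
  unfolding pair2_def by (simp add: wedge_linear_simps)

lemma pair2_zero_right: "pair2 W p X (\<lambda>i. 0) = 0"
  unfolding pair2_def by (simp add: wedge_linear_simps)

lemmas pair2_linear_simps =
  pair2_add_left pair2_diff_left pair2_scale_left pair2_add_right pair2_diff_right pair2_scale_right
  pair2_zero_left pair2_zero_right

lemma pair2_ext1_left:
  assumes "bilinear p"
  shows "pair2 W p (ext1 f X) Y = pair2 W (\<lambda>x y. p (f x) y) X Y"
proof -
  have expand: "p (f (axis a 1)) y = (\<Sum>c\<in>UNIV. f (axis a 1) $ c * p (axis c 1) y)" for a y
    using linear_basis_expansion[of "\<lambda>x. p x y" "f (axis a 1)"] assms by (simp add: bilinear_def)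
  have "pair2 W p (ext1 f X) Y = (\<Sum>c\<in>UNIV. \<Sum>b\<in>UNIV. \<Sum>a\<in>UNIV.
          (f (axis a 1) $ c * p (axis c 1) (axis b 1)) *\<^sub>R W (X a) (Y b))"
    unfolding pair2_def ext1_def by (simp add: wedge_linear_simps scaleR_sum_right mult.commute)
  also have "\<dots> = (\<Sum>a\<in>UNIV. \<Sum>b\<in>UNIV. \<Sum>c\<in>UNIV.
          (f (axis a 1) $ c * p (axis c 1) (axis b 1)) *\<^sub>R W (X a) (Y b))"
    by (subst sum.swap, rule sum_rotate3[symmetric])
  finally show ?thesis
    unfolding pair2_def expand by (simp add: scaleR_sum_left)
qed

lemma pair2_ext1_right:
  assumes "bilinear p"
  shows "pair2 W p X (ext1 f Y) = pair2 W (\<lambda>x y. p x (f y)) X Y"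
proof -
  have expand: "p x (f (axis b 1)) = (\<Sum>c\<in>UNIV. f (axis b 1) $ c * p x (axis c 1))" for x b
    using linear_basis_expansion[of "\<lambda>y. p x y" "f (axis b 1)"] assms by (simp add: bilinear_def)
  have "pair2 W p X (ext1 f Y) = (\<Sum>a\<in>UNIV. \<Sum>c\<in>UNIV. \<Sum>b\<in>UNIV.
          (f (axis b 1) $ c * p (axis a 1) (axis c 1)) *\<^sub>R W (X a) (Y b))"
    unfolding pair2_def ext1_def by (simp add: wedge_linear_simps scaleR_sum_right mult.commute)
  also have "\<dots> = (\<Sum>a\<in>UNIV. \<Sum>b\<in>UNIV. \<Sum>c\<in>UNIV.
          (f (axis b 1) $ c * p (axis a 1) (axis c 1)) *\<^sub>R W (X a) (Y b))"
    by (rule sum_swap23)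
  finally show ?thesis
    unfolding pair2_def expand by (simp add: scaleR_sum_left)
qed

lemma pair2_ext2_left:
  assumes "bilinear p"
  shows "pair2 W p (ext2 W f X Y) Z = pair3 W (\<lambda>x y z. p (f x y) z) X Y Z"
proof -
  have expand: "p (f (axis a 1) (axis b 1)) z
      = (\<Sum>k\<in>UNIV. f (axis a 1) (axis b 1) $ k * p (axis k 1) z)" for a b z
    using linear_basis_expansion[of "\<lambda>x. p x z" "f (axis a 1) (axis b 1)"] assms
    by (simp add: bilinear_def)
  have "pair2 W p (ext2 W f X Y) Z = (\<Sum>k\<in>UNIV. \<Sum>c\<in>UNIV. \<Sum>a\<in>UNIV. \<Sum>b\<in>UNIV.
          (f (axis a 1) (axis b 1) $ k * p (axis k 1) (axis c 1)) *\<^sub>R W (W (X a) (Y b)) (Z c))"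
    unfolding pair2_def ext2_def by (simp add: wedge_linear_simps scaleR_sum_right mult.commute)
  also have "\<dots> = (\<Sum>c\<in>UNIV. \<Sum>a\<in>UNIV. \<Sum>k\<in>UNIV. \<Sum>b\<in>UNIV.
          (f (axis a 1) (axis b 1) $ k * p (axis k 1) (axis c 1)) *\<^sub>R W (W (X a) (Y b)) (Z c))"
    by (rule sum_rotate3)
  also have "\<dots> = (\<Sum>a\<in>UNIV. \<Sum>b\<in>UNIV. \<Sum>c\<in>UNIV. \<Sum>k\<in>UNIV.
          (f (axis a 1) (axis b 1) $ k * p (axis k 1) (axis c 1)) *\<^sub>R W (W (X a) (Y b)) (Z c))"
    by (subst sum_swap23, subst sum.swap, rule sum.cong[OF refl], rule sum_swap23[symmetric])
  finally show ?thesis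
    unfolding pair3_def expand by (simp add: scaleR_sum_left)
qed

lemma pair2_ext2_right:
  assumes "bilinear p"
  shows "pair2 W p X (ext2 W f Y Z) = pair3 W (\<lambda>x y z. p x (f y z)) X Y Z"
proof -
  have expand: "p x (f (axis b 1) (axis c 1))
      = (\<Sum>k\<in>UNIV. f (axis b 1) (axis c 1) $ k * p x (axis k 1))" for x b c
    using linear_basis_expansion[of "\<lambda>y. p x y" "f (axis b 1) (axis c 1)"] assms
    by (simp add: bilinear_def)
  have "pair2 W p X (ext2 W f Y Z) = (\<Sum>a\<in>UNIV. \<Sum>k\<in>UNIV. \<Sum>b\<in>UNIV. \<Sum>c\<in>UNIV.
          (f (axis b 1) (axis c 1) $ k * p (axis a 1) (axis k 1)) *\<^sub>R W (W (X a) (Y b)) (Z c))"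
    unfolding pair2_def ext2_def
    by (simp add: wedge_linear_simps wedge_assoc scaleR_sum_right mult.commute)
  also have "\<dots> = (\<Sum>a\<in>UNIV. \<Sum>b\<in>UNIV. \<Sum>c\<in>UNIV. \<Sum>k\<in>UNIV.
          (f (axis b 1) (axis c 1) $ k * p (axis a 1) (axis k 1)) *\<^sub>R W (W (X a) (Y b)) (Z c))"
    by (rule sum.cong[OF refl], rule sum_rotate3)
  finally show ?thesis
    unfolding pair3_def expand by (simp add: scaleR_sum_left)
qed

lemma pair3_ext2_right:
  assumes "\<And>x y. linear (q x y)"
  shows "pair3 W q X Y (ext2 W f Z U) = pair4 W (\<lambda>x y z u. q x y (f z u)) X Y Z U"
proof -
  have expand: "q x y (f (axis c 1) (axis e 1))
      = (\<Sum>k\<in>UNIV. f (axis c 1) (axis e 1) $ k * q x y (axis k 1))" for x y c e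
    using linear_basis_expansion[of "q x y" "f (axis c 1) (axis e 1)"] assms by simp
  have "pair3 W q X Y (ext2 W f Z U) = (\<Sum>a\<in>UNIV. \<Sum>b\<in>UNIV. \<Sum>k\<in>UNIV. \<Sum>c\<in>UNIV. \<Sum>e\<in>UNIV.
          (f (axis c 1) (axis e 1) $ k * q (axis a 1) (axis b 1) (axis k 1))
            *\<^sub>R W (W (W (X a) (Y b)) (Z c)) (U e))"
    unfolding pair3_def ext2_def
    by (simp add: wedge_linear_simps wedge_assoc scaleR_sum_right mult.commute)
  also have "\<dots> = (\<Sum>a\<in>UNIV. \<Sum>b\<in>UNIV. \<Sum>c\<in>UNIV. \<Sum>e\<in>UNIV. \<Sum>k\<in>UNIV.
          (f (axis c 1) (axis e 1) $ k * q (axis a 1) (axis b 1) (axis k 1))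
            *\<^sub>R W (W (W (X a) (Y b)) (Z c)) (U e))"
    by (rule sum.cong[OF refl], rule sum.cong[OF refl], rule sum_rotate3)
  finally show ?thesis
    unfolding pair4_def expand by (simp add: scaleR_sum_left)
qed

lemma pair2_ext2_both:
  assumes "bilinear p"
  shows "pair2 W p (ext2 W f X Y) (ext2 W g Z U)
    = pair4 W (\<lambda>x y z u. p (f x y) (g z u)) X Y Z U"
  unfolding pair2_ext2_left[OF assms]
  by (rule pair3_ext2_right) (use assms in \<open>simp add: bilinear_def\<close>)

lemma pair3_antisym_eq_0:
  assumes "vform hom k X" "even k" "\<And>x y z. q y x z = - q x y z"
  shows "pair3 W q X X Z = 0"
proof -
  have "(\<lambda>y x z. q x y z) = (\<lambda>x y z. (-1) * q x y z)"
    by (intro ext) (metis assms(3) mult_minus1)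
  moreover have "(-1::real) ^ (k * k) = 1"
    using assms(2) by simp
  ultimately have "pair3 W q X X Z = pair3 W (\<lambda>x y z. (-1) * q x y z) X X Z"
    using pair3_swap12[OF assms(1,1), of q Z] by simp
  also have "\<dots> = (-1) *\<^sub>R pair3 W q X X Z"
    by (rule pair3_coeff_scale)
  finally show ?thesis
    by (rule eq_scaleR_self_imp_zero) simp
qed

lemma pair4_cyclic_eq_0:
  assumes "vform hom k X" "\<And>x y z u. q x y z u + q y z x u + q z x y u = 0"
  shows "pair4 W q X X X U = 0"
proof -
  have "even (k * (k + k))"
    by simp
  then have sign: "(-1::real) ^ (k * (k + k)) = 1"
    by simp
  have rot1: "pair4 W q X X X U = pair4 W (\<lambda>x y z u. q z x y u) X X X U"
    using pair4_rotate[OF assms(1,1,1), of q U] sign by simp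
  have rot2: "pair4 W q X X X U = pair4 W (\<lambda>x y z u. q y z x u) X X X U"
    using pair4_rotate[OF assms(1,1,1), of "\<lambda>x y z u. q z x y u" U] sign rot1 by simp
  have "pair4 W q X X X U + pair4 W (\<lambda>x y z u. q y z x u) X X X U
      + pair4 W (\<lambda>x y z u. q z x y u) X X X U = pair4 W (\<lambda>x y z u. 0) X X X U"
    by (simp only: pair4_coeff_add[symmetric] assms(2))
  also have "\<dots> = 0"
    unfolding pair4_def by simp
  finally have sum3: "pair4 W q X X X U + pair4 W q X X X U + pair4 W q X X X U = 0"
    by (simp only: rot1[symmetric] rot2[symmetric])
  have "(3::real) *\<^sub>R pair4 W q X X X U = (1 + 1 + 1) *\<^sub>R pair4 W q X X X U"
    by simp
  also have "\<dots> = 0"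
    using sum3 by (simp only: scaleR_add_left scaleR_one)
  finally show ?thesis
    by simp
qed

end

lemma lie_algebra_antisym:
  assumes "lie_algebra br"
  shows "br x y = - br y x"
proof -
  have b: "bilinear br" and z: "\<And>x. br x x = 0"
    using assms by (auto simp: lie_algebra_def)
  have "br x y + br y x = br (x + y) (x + y) - br x x - br y y"
    by (simp add: bilinear_ladd[OF b] bilinear_radd[OF b] algebra_simps)
  then show ?thesis
    by (simp add: z eq_neg_iff_add_eq_0)
qed

lemma bilinear_compose_left: "bilinear p \<Longrightarrow> linear f \<Longrightarrow> bilinear (\<lambda>x y. p (f x) y)"
  unfolding bilinear_def by (auto intro: linear_compose[unfolded o_def])

lemma bilinear_compose_right: "bilinear p \<Longrightarrow> linear f \<Longrightarrow> bilinear (\<lambda>x y. p x (f y))"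
  unfolding bilinear_def by (auto intro: linear_compose[unfolded o_def])

locale chern_simons_5 = graded_forms W d hom
  for W :: "'w::real_vector \<Rightarrow> 'w \<Rightarrow> 'w" and d :: "'w \<Rightarrow> 'w" and hom :: "nat \<Rightarrow> 'w set" +
  fixes brl :: "real^'l::finite \<Rightarrow> real^'l \<Rightarrow> real^'l"
    and brh :: "real^'h::finite \<Rightarrow> real^'h \<Rightarrow> real^'h"
    and brg :: "real^'g::finite \<Rightarrow> real^'g \<Rightarrow> real^'g"
    and \<beta> :: "real^'l \<Rightarrow> real^'h" and \<alpha> :: "real^'h \<Rightarrow> real^'g"
    and actl :: "real^'g \<Rightarrow> real^'l \<Rightarrow> real^'l" and acth :: "real^'g \<Rightarrow> real^'h \<Rightarrow> real^'h"
    and pf :: "real^'h \<Rightarrow> real^'h \<Rightarrow> real^'l"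
    and ph :: "real^'h \<Rightarrow> real^'h \<Rightarrow> real" and pgl :: "real^'g \<Rightarrow> real^'l \<Rightarrow> real"
    and A :: "'g \<Rightarrow> 'w" and B :: "'h \<Rightarrow> 'w" and C :: "'l \<Rightarrow> 'w"
  assumes xmod: "diff_2crossed_module brl brh brg \<beta> \<alpha> actl acth pf"
    and pairings: "invariant_pairings brl brh brg \<beta> \<alpha> actl acth pf ph pgl"
    and A1: "vform hom 1 A" and B2: "vform hom 2 B" and C3: "vform hom 3 C"
begin

lemma alpha_linear: "linear \<alpha>"
  and beta_linear: "linear \<beta>"
  and alpha_beta: "\<alpha> (\<beta> z) = 0"
  and beta_actl: "\<beta> (actl x z) = acth x (\<beta> z)"
  and beta_peiffer: "\<beta> (pf y1 y2) = brh y1 y2 - acth (\<alpha> y1) y2"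
  and acth_bracket: "acth (brg x1 x2) y = acth x1 (acth x2 y) - acth x2 (acth x1 y)"
  using xmod unfolding diff_2crossed_module_def lie_hom_def lie_action_deriv_def by meson+

lemma lie_g: "lie_algebra brg"
  and lie_h: "lie_algebra brh"
  using xmod unfolding diff_2crossed_module_def by blast+

lemma ph_bilinear: "bilinear ph"
  and ph_antisym: "ph y1 y2 = - ph y2 y1"
  and ph_act_sym: "ph y (acth x y1) = ph y1 (acth x y)"
  and ph_act_invariant: "ph (acth x y1) y2 + ph y1 (acth x y2) = 0"
  and pgl_bilinear: "bilinear pgl"
  and pgl_bracket: "pgl (brg x1 x2) z = - pgl x2 (actl x1 z)"
  and pgl_alpha: "pgl (\<alpha> y) z = - ph (\<beta> z) y"
  and pgl_peiffer: "pgl x (pf y1 y2) = 1/2 * ph y2 (acth x y1)"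
  using pairings unfolding invariant_pairings_def by meson+

lemma ph_act_left: "ph (acth x y1) y2 = - ph y1 (acth x y2)"
  using ph_act_invariant by (simp add: eq_neg_iff_add_eq_0)

lemma ph_beta_left: "ph (\<beta> z) y = - pgl (\<alpha> y) z"
  by (simp add: pgl_alpha)

lemma ph_beta_right: "ph y (\<beta> z) = pgl (\<alpha> y) z"
  by (simp add: pgl_alpha ph_antisym[of y])

lemma pgl_bracket_left: "pgl (brg x y) z = pgl x (actl y z)"
  using lie_algebra_antisym[OF lie_g, of x y] pgl_bracket[of y x z] bilinear_lneg[OF pgl_bilinear]
  by simp

lemma coefficient_bilinear:
  "bilinear (\<lambda>x y. pgl (\<alpha> x) y)" "bilinear (\<lambda>x y. ph x (\<beta> y))"
  "bilinear (\<lambda>x y. ph (\<beta> x) y)" "bilinear (\<lambda>x y. ph (\<beta> x) (\<beta> y))"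
  using bilinear_compose_left bilinear_compose_right pgl_bilinear ph_bilinear
    alpha_linear beta_linear
  by blast+

abbreviation "dA \<equiv> \<lambda>i. d (A i)"
abbreviation "dB \<equiv> \<lambda>i. d (B i)"
abbreviation "dC \<equiv> \<lambda>i. d (C i)"

lemma vform_dA: "vform hom 2 dA" and vform_dB: "vform hom 3 dB"
  using vform_d[OF A1] vform_d[OF B2] by (simp_all add: numeral_eq_Suc)

lemma d_CS5_expansion:
  "d (CS5 W d brg \<alpha> \<beta> acth ph pgl A B C) =
     2 *\<^sub>R pair2 W pgl dA dC
     + pair3 W (\<lambda>x y z. pgl (brg x y) z) dA A C - pair3 W (\<lambda>x y z. pgl (brg x y) z) A dA C
     + pair3 W (\<lambda>x y z. pgl (brg x y) z) A A dC
     - pair2 W (\<lambda>x y. pgl (\<alpha> x) y) dB C - pair2 W (\<lambda>x y. pgl (\<alpha> x) y) B dC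
     + pair2 W ph dB dB + pair3 W (\<lambda>x y z. ph x (acth y z)) dB A B
     + pair3 W (\<lambda>x y z. ph x (acth y z)) B dA B - pair3 W (\<lambda>x y z. ph x (acth y z)) B A dB
     - pair2 W (\<lambda>x y. ph x (\<beta> y)) dB C - pair2 W (\<lambda>x y. ph x (\<beta> y)) B dC"
  unfolding CS5_def fake_curv_def curv2_def
  by (simp add: pair2_linear_simps pair2_ext1_left pair2_ext1_right pair2_ext2_left pair2_ext2_right
      pgl_bilinear ph_bilinear coefficient_bilinear d_linear_simps d_d
      d_pair2[OF vform_dA] d_pair2[OF A1] d_pair2[OF B2] d_pair3[OF A1 A1] d_pair3[OF B2 A1]
      scaleR_add_right scaleR_diff_right)

lemma curvature_pairings_expansion:
  "2 *\<^sub>R pair2 W pgl (curv1 W d brg \<alpha> A B) (curv3 W d actl pf A B C)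
     + pair2 W ph (curv2 W d acth \<beta> A B C) (curv2 W d acth \<beta> A B C) =
     2 *\<^sub>R pair2 W pgl dA dC + 2 *\<^sub>R pair3 W (\<lambda>x y z. pgl x (actl y z)) dA A C
     + 2 *\<^sub>R pair3 W (\<lambda>x y z. pgl x (pf y z)) dA B B
     + pair3 W (\<lambda>x y z. pgl (brg x y) z) A A dC
     + pair4 W (\<lambda>x y z u. pgl (brg x y) (actl z u)) A A A C
     + pair4 W (\<lambda>x y z u. pgl (brg x y) (pf z u)) A A B B
     - 2 *\<^sub>R pair2 W (\<lambda>x y. pgl (\<alpha> x) y) B dC
     - 2 *\<^sub>R pair3 W (\<lambda>x y z. pgl (\<alpha> x) (actl y z)) B A C
     - 2 *\<^sub>R pair3 W (\<lambda>x y z. pgl (\<alpha> x) (pf y z)) B B B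
     + pair2 W ph dB dB + pair3 W (\<lambda>x y z. ph x (acth y z)) dB A B
     - pair2 W (\<lambda>x y. ph x (\<beta> y)) dB C
     + pair3 W (\<lambda>x y z. ph (acth x y) z) A B dB
     + pair4 W (\<lambda>x y z u. ph (acth x y) (acth z u)) A B A B
     - pair3 W (\<lambda>x y z. ph (acth x y) (\<beta> z)) A B C
     - pair2 W (\<lambda>x y. ph (\<beta> x) y) C dB
     - pair3 W (\<lambda>x y z. ph (\<beta> x) (acth y z)) C A B
     + pair2 W (\<lambda>x y. ph (\<beta> x) (\<beta> y)) C C"
  unfolding curv1_def curv2_def curv3_def
  \<comment> \<open>\<open>pair2_ext2_both\<close> must fire before the one-sided rules, hence two passes\<close>
  apply (simp add: pair2_linear_simps pair2_ext1_left pair2_ext1_right pair2_ext2_both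
      pgl_bilinear ph_bilinear coefficient_bilinear)
  apply (simp add: pair2_ext2_left pair2_ext2_right pgl_bilinear ph_bilinear coefficient_bilinear
      scaleR_add_right scaleR_diff_right algebra_simps)
  done

lemma pair2_ph_beta_right:
  "pair2 W (\<lambda>x y. ph x (\<beta> y)) X Y = pair2 W (\<lambda>x y. pgl (\<alpha> x) y) X Y"
  by (simp add: ph_beta_right)

lemma pair2_ph_beta_beta: "pair2 W (\<lambda>x y. ph (\<beta> x) (\<beta> y)) X Y = 0"
  unfolding pair2_def
  by (simp add: ph_beta_right alpha_beta bilinear_lzero[OF pgl_bilinear])

lemma pgl_bracket_dA_A_C:
  "pair3 W (\<lambda>x y z. pgl (brg x y) z) dA A C = pair3 W (\<lambda>x y z. pgl x (actl y z)) dA A C"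
  by (simp add: pgl_bracket_left)

lemma pgl_bracket_A_dA_C:
  "pair3 W (\<lambda>x y z. pgl (brg x y) z) A dA C = - pair3 W (\<lambda>x y z. pgl x (actl y z)) dA A C"
  using pair3_swap12[OF A1 vform_dA, of "\<lambda>x y z. pgl (brg x y) z" C]
  by (simp add: pgl_bracket pair3_coeff_minus)

lemma ph_beta_C_dB:
  "pair2 W (\<lambda>x y. ph (\<beta> x) y) C dB = pair2 W (\<lambda>x y. pgl (\<alpha> x) y) dB C"
  using pair2_swap[OF C3 vform_dB, of "\<lambda>x y. ph (\<beta> x) y"]
  by (simp add: ph_beta_left pair2_coeff_minus)

lemma ph_act_A_B_dB:
  "pair3 W (\<lambda>x y z. ph (acth x y) z) A B dB = - pair3 W (\<lambda>x y z. ph x (acth y z)) B A dB"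
  using pair3_swap12[OF A1 B2, of "\<lambda>x y z. ph (acth x y) z" dB]
  by (simp add: ph_act_left pair3_coeff_minus)

lemma ph_act_B_dA_B:
  "pair3 W (\<lambda>x y z. ph x (acth y z)) B dA B = 2 *\<^sub>R pair3 W (\<lambda>x y z. pgl x (pf y z)) dA B B"
proof -
  have "ph y (acth x z) = 2 * pgl x (pf y z)" for x y z
    by (simp add: pgl_peiffer ph_act_sym[of y])
  then show ?thesis
    using pair3_swap12[OF B2 vform_dA, of "\<lambda>x y z. ph x (acth y z)" B]
    by (simp add: pair3_coeff_scale)
qed

lemma ph_beta_C_act_A_B:
  "pair3 W (\<lambda>x y z. ph (\<beta> x) (acth y z)) C A B
     = - (2 *\<^sub>R pair3 W (\<lambda>x y z. pgl (\<alpha> x) (actl y z)) B A C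
          + pair3 W (\<lambda>x y z. ph (acth x y) (\<beta> z)) A B C)"
proof -
  have coeff: "2 * pgl (\<alpha> y) (actl x z) + ph (acth x y) (\<beta> z) = ph (\<beta> z) (acth x y)" for x y z
    using ph_act_sym[of y x "\<beta> z"] ph_antisym[of "acth x y"]
    by (simp add: pgl_alpha beta_actl ph_act_left)
  have rotate: "pair3 W (\<lambda>x y z. ph (\<beta> x) (acth y z)) C A B
      = - pair3 W (\<lambda>x y z. ph (\<beta> z) (acth x y)) A B C"
    using pair3_rotate[OF C3 A1 B2, of "\<lambda>x y z. ph (\<beta> x) (acth y z)"] by simp
  have swap: "pair3 W (\<lambda>x y z. pgl (\<alpha> x) (actl y z)) B A C
      = pair3 W (\<lambda>x y z. pgl (\<alpha> y) (actl x z)) A B C"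
    using pair3_swap12[OF B2 A1, of "\<lambda>x y z. pgl (\<alpha> x) (actl y z)" C] by simp
  have "2 *\<^sub>R pair3 W (\<lambda>x y z. pgl (\<alpha> y) (actl x z)) A B C
      + pair3 W (\<lambda>x y z. ph (acth x y) (\<beta> z)) A B C
      = pair3 W (\<lambda>x y z. ph (\<beta> z) (acth x y)) A B C"
    by (simp only: pair3_coeff_scale[symmetric] pair3_coeff_add[symmetric] coeff)
  then show ?thesis
    by (simp only: rotate swap)
qed

lemma ph_bracket_B_B_B: "pair3 W (\<lambda>x y z. ph (brh y z) x) B B B = 0"
proof -
  have "pair3 W (\<lambda>x y z. ph (brh y z) x) B B B = pair3 W (\<lambda>x y z. ph (brh x y) z) B B B"
    using pair3_rotate[OF B2 B2 B2, of "\<lambda>x y z. ph (brh y z) x"] by simp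
  also have "\<dots> = 0"
  proof (rule pair3_antisym_eq_0[OF B2])
    show "ph (brh y x) z = - ph (brh x y) z" for x y z
      using lie_algebra_antisym[OF lie_h, of y x] bilinear_lneg[OF ph_bilinear] by simp
  qed simp
  finally show ?thesis .
qed

lemma pgl_alpha_B_peiffer_B_B: "pair3 W (\<lambda>x y z. pgl (\<alpha> x) (pf y z)) B B B = 0"
proof -
  define s where "s x y z = ph (acth (\<alpha> x) y) z" for x y z
  have "pair3 W (\<lambda>x y z. pgl (\<alpha> x) (pf y z)) B B B
      = pair3 W (\<lambda>x y z. s y z x - ph (brh y z) x) B B B"
    by (simp add: s_def pgl_alpha beta_peiffer bilinear_lsub[OF ph_bilinear])
  also have "\<dots> = pair3 W s B B B"
    using pair3_rotate[OF B2 B2 B2, of "\<lambda>x y z. s y z x"]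
    by (simp add: pair3_coeff_diff ph_bracket_B_B_B)
  finally have rotated: "pair3 W (\<lambda>x y z. pgl (\<alpha> x) (pf y z)) B B B = pair3 W s B B B" .
  have "pgl (\<alpha> x) (pf y z) = (-1/2) * s x y z" for x y z
    using ph_antisym[of z "acth (\<alpha> x) y"] by (simp add: s_def pgl_peiffer)
  then have "pair3 W (\<lambda>x y z. pgl (\<alpha> x) (pf y z)) B B B = pair3 W (\<lambda>x y z. (-1/2) * s x y z) B B B"
    by simp
  also have "\<dots> = (-1/2) *\<^sub>R pair3 W s B B B"
    by (rule pair3_coeff_scale)
  finally have "pair3 W s B B B = (-1/2) *\<^sub>R pair3 W s B B B"
    unfolding rotated .
  then show ?thesis
    unfolding rotated by (rule eq_scaleR_self_imp_zero) simp
qed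

lemma pgl_bracket_A_A_act_A_C: "pair4 W (\<lambda>x y z u. pgl (brg x y) (actl z u)) A A A C = 0"
proof (rule pair4_cyclic_eq_0[OF A1])
  fix x y z u
  have "brg z (brg x y) + brg x (brg y z) + brg y (brg z x) = 0"
    using lie_g unfolding lie_algebra_def by (metis add.commute add.left_commute)
  then have "pgl (brg z (brg x y) + brg x (brg y z) + brg y (brg z x)) u = 0"
    by (simp add: bilinear_lzero[OF pgl_bilinear])
  then show "pgl (brg x y) (actl z u) + pgl (brg y z) (actl x u) + pgl (brg z x) (actl y u) = 0"
    by (simp add: bilinear_ladd[OF pgl_bilinear] pgl_bracket)
qed

lemma ph_act_A_B_act_A_B:
  "pair4 W (\<lambda>x y z u. ph (acth x y) (acth z u)) A B A B
     = - pair4 W (\<lambda>x y z u. pgl (brg x y) (pf z u)) A A B B"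
proof -
  define K where "K x y z u = ph u (acth x (acth y z))" for x y z u
  have swap: "pair4 W (\<lambda>x y z u. K y x z u) A A B B = - pair4 W K A A B B"
    using pair4_swap12[OF A1 A1, of "\<lambda>x y z u. K y x z u" B B] by simp
  have "ph (acth x z) (acth y u) = K y x z u" for x y z u
    using ph_act_left[of y "acth x z" u] ph_antisym[of "acth y (acth x z)" u] by (simp add: K_def)
  then have act: "pair4 W (\<lambda>x y z u. ph (acth x y) (acth z u)) A B A B = - pair4 W K A A B B"
    using pair4_swap23[OF B2 A1, of "\<lambda>x y z u. ph (acth x y) (acth z u)" A B] swap by simp
  have "pair4 W (\<lambda>x y z u. pgl (brg x y) (pf z u)) A A B B
      = pair4 W (\<lambda>x y z u. 1/2 * K x y z u + (-1/2) * K y x z u) A A B B"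
    by (simp add: K_def pgl_peiffer acth_bracket bilinear_rsub[OF ph_bilinear] algebra_simps)
  also have "\<dots> = (1/2) *\<^sub>R pair4 W K A A B B + (-1/2) *\<^sub>R pair4 W (\<lambda>x y z u. K y x z u) A A B B"
    by (simp only: pair4_coeff_add pair4_coeff_scale)
  also have "\<dots> = pair4 W K A A B B"
    by (simp add: swap flip: scaleR_left_distrib)
  finally show ?thesis
    using act by simp
qed

end

theorem mainTheorem10:
  fixes wedge :: "'w::real_vector \<Rightarrow> 'w \<Rightarrow> 'w" and d :: "'w \<Rightarrow> 'w" and hom :: "nat \<Rightarrow> 'w set"
    and brl :: "real^'l \<Rightarrow> real^'l \<Rightarrow> real^'l"
    and brh :: "real^'h \<Rightarrow> real^'h \<Rightarrow> real^'h"
    and brg :: "real^'g \<Rightarrow> real^'g \<Rightarrow> real^'g"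
    and \<beta> :: "real^'l \<Rightarrow> real^'h" and \<alpha> :: "real^'h \<Rightarrow> real^'g"
    and actl :: "real^'g \<Rightarrow> real^'l \<Rightarrow> real^'l" and acth :: "real^'g \<Rightarrow> real^'h \<Rightarrow> real^'h"
    and pf :: "real^'h \<Rightarrow> real^'h \<Rightarrow> real^'l"
    and ph :: "real^'h \<Rightarrow> real^'h \<Rightarrow> real" and pgl :: "real^'g \<Rightarrow> real^'l \<Rightarrow> real"
    and A :: "'g::finite \<Rightarrow> 'w" and B :: "'h::finite \<Rightarrow> 'w" and C :: "'l::finite \<Rightarrow> 'w"
  assumes forms: "forms_algebra wedge d hom"
    and xmod: "diff_2crossed_module brl brh brg \<beta> \<alpha> actl acth pf"
    and pairings: "invariant_pairings brl brh brg \<beta> \<alpha> actl acth pf ph pgl"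
    and A1: "vform hom 1 A" and B2: "vform hom 2 B" and C3: "vform hom 3 C"
  shows "d (CS5 wedge d brg \<alpha> \<beta> acth ph pgl A B C) =
           2 *\<^sub>R pair2 wedge pgl (curv1 wedge d brg \<alpha> A B) (curv3 wedge d actl pf A B C)
           + pair2 wedge ph (curv2 wedge d acth \<beta> A B C) (curv2 wedge d acth \<beta> A B C)"
proof -
  interpret chern_simons_5 wedge d hom brl brh brg \<beta> \<alpha> actl acth pf ph pgl A B C
    by (rule chern_simons_5.intro[OF graded_forms.intro[OF forms]
          chern_simons_5_axioms.intro[OF xmod pairings A1 B2 C3]])
  show ?thesis
    unfolding d_CS5_expansion curvature_pairings_expansion
    by (simp only: pgl_bracket_dA_A_C pgl_bracket_A_dA_C ph_beta_C_dB ph_act_A_B_dB ph_act_B_dA_B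
        ph_beta_C_act_A_B pgl_alpha_B_peiffer_B_B pgl_bracket_A_A_act_A_C ph_act_A_B_act_A_B
        pair2_ph_beta_right pair2_ph_beta_beta)
      (simp add: algebra_simps scaleR_2)
qed

end
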